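(* Let $H:\mathcal{M}\to(-\infty,\infty]$ be proper, let $\tau_n>0$ with $\tau_n\to0$, and let $\mu_n,\nu_n\in\mathcal{M}$ with $\nu_n\in J_{\tau_n}[\mu_n]$ for all $n$. Suppose there is a constant $C$ with $W_2(\mu_n,\nu_n)\le C\tau_n$ for all $n$, and that $\mu_n$ converges narrowly to $\mu$. Then $\nu_n$ converges narrowly to $\mu$. Moreover, choosing $\gamma_n\in\Gamma_o(\mu_n,\nu_n)$, $$\bigcap_{m=1}^\infty\overline{co}\Big(\Big\{\frac{Id-\bar\gamma^{\nu_n}_{\mu_n}}{\tau_n}\,\mu_n: n\ge m\Big\}\Big)=\bigcap_{m=1}^\infty\overline{co}\Big(\Big\{\frac{\bar\gamma^{\mu_n}_{\nu_n}-Id}{\tau_n}\,\nu_n: n\ge m\Big\}\Big),$$ where the barycentric projections are taken with respect to $\gamma_n$ and $\overline{co}$ denotes the weak*-closed convex hull.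
   Context: $\mathcal{M}$ is the set of Borel probability measures on $\mathbb{R}^D$ with finite second moment, with the 2-Wasserstein distance $W_2$; $\Gamma_o(\mu,\nu)$ is the set of optimal couplings for $W_2$. For $\gamma\in\Gamma_o(\mu,\nu)$ the barycentric projections are characterized by $\int\psi(x)\bar\gamma^\nu_\mu(x)\,d\mu(x)=\int\psi(x)\,y\,d\gamma(x,y)$ and $\int\psi(y)\bar\gamma^\mu_\nu(y)\,d\nu(y)=\int\psi(y)\,x\,d\gamma(x,y)$ for all bounded continuous $\psi$. For $\tau>0$, $H_\tau(\mu)=\inf_{\nu}\{\frac{1}{2\tau}W_2^2(\mu,\nu)+H(\nu)\}$ and $J_\tau[\mu]$ is the set of $\nu$ attaining this infimum. Narrow convergence means convergence against all bounded continuous functions. For $w\in L^1(\mu;\mathbb{R}^D)$, $w\mu$ denotes the $\mathbb{R}^D$-valued measure with density $w$ w.r.t. $\mu$; such vector measures are given the weak* topology as duals of $C_c(\mathbb{R}^D;\mathbb{R}^D)$. *)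

theory Defs
  imports "HOL-Probability.Probability"
begin

text \<open>The set M of Borel probability measures on the Euclidean space 'a with finite second moment.\<close>
definition P2 :: "('a::euclidean_space) measure set" where
  "P2 = {\<mu>. prob_space \<mu> \<and> sets \<mu> = sets borel \<and> integrable \<mu> (\<lambda>x. norm x ^ 2)}"

definition Pborel :: "('a::euclidean_space) measure set" where
  "Pborel = {\<mu>. prob_space \<mu> \<and> sets \<mu> = sets borel}"

definition couplings :: "('a::euclidean_space) measure \<Rightarrow> 'a measure \<Rightarrow> ('a \<times> 'a) measure set" where
  "couplings \<mu> \<nu> = {\<gamma>. prob_space \<gamma> \<and> sets \<gamma> = sets (borel \<Otimes>\<^sub>M borel)
      \<and> distr \<gamma> borel fst = \<mu> \<and> distr \<gamma> borel snd = \<nu>}"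

definition transport_cost :: "(('a::euclidean_space) \<times> 'a) measure \<Rightarrow> real" where
  "transport_cost \<gamma> = (\<integral>p. (norm (fst p - snd p))^2 \<partial>\<gamma>)"

definition W2sq :: "('a::euclidean_space) measure \<Rightarrow> 'a measure \<Rightarrow> real" where
  "W2sq \<mu> \<nu> = Inf (transport_cost ` couplings \<mu> \<nu>)"

definition W2 :: "('a::euclidean_space) measure \<Rightarrow> 'a measure \<Rightarrow> real" where
  "W2 \<mu> \<nu> = sqrt (W2sq \<mu> \<nu>)"

definition opt_couplings :: "('a::euclidean_space) measure \<Rightarrow> 'a measure \<Rightarrow> ('a \<times> 'a) measure set" where
  "opt_couplings \<mu> \<nu> = {\<gamma> \<in> couplings \<mu> \<nu>. transport_cost \<gamma> = W2sq \<mu> \<nu>}"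

definition bcont :: "(('a::euclidean_space) \<Rightarrow> real) set" where
  "bcont = {\<psi>. continuous_on UNIV \<psi> \<and> bounded (range \<psi>)}"

text \<open>b is a barycentric projection of \<gamma> onto the second marginal, as a function of the first
  variable (i.e. \<bar>\<gamma>^\<nu>_\<mu>): b \<in> L^1(\<mu>) and for all bounded continuous \<psi>,
  \<integral>\<psi>(x) b(x) d\<mu> = \<integral>\<psi>(x) y d\<gamma>(x,y).\<close>
definition is_bary_fst :: "(('a::euclidean_space) \<times> 'a) measure \<Rightarrow> 'a measure \<Rightarrow> ('a \<Rightarrow> 'a) \<Rightarrow> bool" where
  "is_bary_fst \<gamma> \<mu> b \<longleftrightarrow> integrable \<mu> b \<and>
     (\<forall>\<psi>\<in>bcont. (\<integral>x. \<psi> x *\<^sub>R b x \<partial>\<mu>) = (\<integral>p. \<psi> (fst p) *\<^sub>R snd p \<partial>\<gamma>))"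

text \<open>c is the barycentric projection \<bar>\<gamma>^\<mu>_\<nu> (function of the second variable):
  \<integral>\<psi>(y) c(y) d\<nu> = \<integral>\<psi>(y) x d\<gamma>(x,y).\<close>
definition is_bary_snd :: "(('a::euclidean_space) \<times> 'a) measure \<Rightarrow> 'a measure \<Rightarrow> ('a \<Rightarrow> 'a) \<Rightarrow> bool" where
  "is_bary_snd \<gamma> \<nu> c \<longleftrightarrow> integrable \<nu> c \<and>
     (\<forall>\<psi>\<in>bcont. (\<integral>y. \<psi> y *\<^sub>R c y \<partial>\<nu>) = (\<integral>p. \<psi> (snd p) *\<^sub>R fst p \<partial>\<gamma>))"

definition proper_fun :: "(('a::euclidean_space) measure \<Rightarrow> ereal) \<Rightarrow> bool" where
  "proper_fun H \<longleftrightarrow> (\<forall>\<mu>\<in>P2. H \<mu> \<noteq> -\<infinity>) \<and> (\<exists>\<mu>\<in>P2. H \<mu> \<noteq> \<infinity>)"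

definition Htau :: "(('a::euclidean_space) measure \<Rightarrow> ereal) \<Rightarrow> real \<Rightarrow> 'a measure \<Rightarrow> ereal" where
  "Htau H \<tau> \<mu> = (INF \<nu>\<in>P2. ereal (W2sq \<mu> \<nu> / (2 * \<tau>)) + H \<nu>)"

definition Jtau :: "(('a::euclidean_space) measure \<Rightarrow> ereal) \<Rightarrow> real \<Rightarrow> 'a measure \<Rightarrow> 'a measure set" where
  "Jtau H \<tau> \<mu> = {\<nu>\<in>P2. ereal (W2sq \<mu> \<nu> / (2 * \<tau>)) + H \<nu> = Htau H \<tau> \<mu>}"

definition narrow_conv :: "(nat \<Rightarrow> ('a::euclidean_space) measure) \<Rightarrow> 'a measure \<Rightarrow> bool" where
  "narrow_conv \<mu>s \<mu> \<longleftrightarrow>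
     (\<forall>f\<in>bcont. (\<lambda>n. \<integral>x. f x \<partial>(\<mu>s n)) \<longlonglongrightarrow> (\<integral>x. f x \<partial>\<mu>))"

definition Cc :: "(('a::euclidean_space) \<Rightarrow> 'a) set" where
  "Cc = {\<phi>. continuous_on UNIV \<phi> \<and> compact (closure {x. \<phi> x \<noteq> 0})}"

text \<open>A functional on C_c(R^D;R^D) is represented as a function on all of 'a \<Rightarrow> 'a that
  vanishes outside C_c. The (topological) dual of C_c (with its standard inductive-limit
  topology) consists of the linear functionals L such that for every compact K there is C
  with |L \<phi>| \<le> C sup|\<phi>| for all \<phi> \<in> C_c supported in K.\<close>
definition Cc_dual :: "((('a::euclidean_space) \<Rightarrow> 'a) \<Rightarrow> real) set" where
  "Cc_dual = {L. (\<forall>\<phi>. \<phi> \<notin> Cc \<longrightarrow> L \<phi> = 0)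
     \<and> (\<forall>\<phi>\<in>Cc. \<forall>\<psi>\<in>Cc. \<forall>a b. L (\<lambda>x. a *\<^sub>R \<phi> x + b *\<^sub>R \<psi> x) = a * L \<phi> + b * L \<psi>)
     \<and> (\<forall>K. compact K \<longrightarrow> (\<exists>C. \<forall>\<phi>\<in>Cc. {x. \<phi> x \<noteq> 0} \<subseteq> K \<longrightarrow>
            \<bar>L \<phi>\<bar> \<le> C * (SUP x. norm (\<phi> x))))}"

text \<open>The vector measure w\<mu>, acting on \<phi> \<in> C_c as \<integral> \<phi> \<cdot> w d\<mu>.\<close>
definition vmeas :: "('a::euclidean_space) measure \<Rightarrow> ('a \<Rightarrow> 'a) \<Rightarrow> ('a \<Rightarrow> 'a) \<Rightarrow> real" where
  "vmeas \<mu> w = (\<lambda>\<phi>. if \<phi> \<in> Cc then (\<integral>x. \<phi> x \<bullet> w x \<partial>\<mu>) else 0)"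

definition fconv_hull :: "(('b \<Rightarrow> real) set) \<Rightarrow> ('b \<Rightarrow> real) set" where
  "fconv_hull S = {f. \<exists>(n::nat) c L. (\<forall>i<n. c i \<ge> 0 \<and> L i \<in> S) \<and> (\<Sum>i<n. c i) = 1
       \<and> f = (\<lambda>\<phi>. \<Sum>i<n. c i * L i \<phi>)}"

text \<open>Weak*-closed convex hull in the dual of C_c: the closure of the convex hull in the
  topology of pointwise convergence (product topology on functionals), intersected with the
  dual space (the weak* topology is the subspace topology).\<close>
definition wstar_cch :: "(((('a::euclidean_space) \<Rightarrow> 'a) \<Rightarrow> real) set) \<Rightarrow> (('a \<Rightarrow> 'a) \<Rightarrow> real) set" where
  "wstar_cch S = closure (fconv_hull S) \<inter> Cc_dual"

end

theory Submission
  imports Defs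
begin

text \<open>
  Both assertions rest on one estimate: a coupling \<open>\<gamma>\<^sub>n\<close> of \<open>\<mu>\<^sub>n\<close> and \<open>\<nu>\<^sub>n\<close> with cost
  \<open>O(\<tau>\<^sub>n\<^sup>2)\<close> moves mass only by \<open>O(\<tau>\<^sub>n)\<close> in mean square.

  (1) For bounded uniformly continuous \<open>h\<close> one has \<open>\<bar>h x - h y\<bar> \<le> \<epsilon> + K\<bar>x - y\<bar>\<^sup>2\<close>, so
  \<open>\<integral>h d\<nu>\<^sub>n - \<integral>h d\<mu>\<^sub>n \<rightarrow> 0\<close>. A bounded continuous \<open>f\<close> is reduced to the compactly supported
  \<open>f \<cdot> cutoff R\<close>; the mass outside the cutoff is small by tightness of the limit \<open>\<mu>\<close>.

  (2) By the defining identities of the barycentric projections, the two vector measures differ on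
  \<open>\<phi> \<in> C\<^sub>c\<close> by \<open>(1/\<tau>\<^sub>n) \<integral> (\<phi> x - \<phi> y) \<bullet> (x - y) d\<gamma>\<^sub>n = O(\<epsilon> + \<tau>\<^sub>n)\<close>, so their difference
  tends to 0 pointwise. A topological lemma about the product topology then shows that two
  pointwise asymptotically equal sequences of functionals have the same intersection of
  weak*-closed convex hulls of tails.
\<close>

section \<open>Closed convex hulls of tails of asymptotically equal sequences\<close>

lemma open_fun_contains_box:
  fixes S :: "('b \<Rightarrow> real) set"
  assumes "open S" "f \<in> S"
  obtains F r where "finite F" "r > 0" "\<And>g. \<forall>i\<in>F. \<bar>g i - f i\<bar> < r \<Longrightarrow> g \<in> S"
proof -
  from assms(1) have "openin (product_topology (\<lambda>i. euclidean) UNIV) S" by (simp add: open_fun_def)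
  from product_topology_open_contains_basis[OF this assms(2)] obtain X where
    X: "f \<in> (\<Pi>\<^sub>E i\<in>UNIV. X i)" "\<And>i. open (X i)" "finite {i. X i \<noteq> UNIV}"
       "(\<Pi>\<^sub>E i\<in>UNIV. X i) \<subseteq> S" by auto
  define F where "F = {i. X i \<noteq> UNIV}"
  have "\<forall>i\<in>F. \<exists>e>0. ball (f i) e \<subseteq> X i"
    using X(1,2) open_contains_ball by blast
  then obtain e where e: "\<And>i. i \<in> F \<Longrightarrow> e i > 0 \<and> ball (f i) (e i) \<subseteq> X i" by metis
  define r where "r = Min (insert 1 (e ` F))"
  have fin: "finite F" using X(3) by (simp add: F_def)
  have r: "r > 0" unfolding r_def using fin e by (subst Min_gr_iff) auto
  have r_le: "r \<le> e i" if "i \<in> F" for i unfolding r_def using fin that by (intro Min_le) auto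
  show thesis
  proof (rule that[OF fin r])
    fix g assume g: "\<forall>i\<in>F. \<bar>g i - f i\<bar> < r"
    have "g i \<in> X i" for i
    proof (cases "i \<in> F")
      case True
      then have "dist (f i) (g i) < e i"
        using g r_le by (metis abs_minus_commute dist_real_def order_less_le_trans)
      then have "g i \<in> ball (f i) (e i)" by simp
      then show ?thesis using e[OF True] by blast
    qed (simp add: F_def)
    then show "g \<in> S" using X(4) by auto
  qed
qed

lemma closure_fun_iff_box:
  fixes A :: "('b \<Rightarrow> real) set"
  shows "f \<in> closure A \<longleftrightarrow> (\<forall>F r. finite F \<and> r > 0 \<longrightarrow> (\<exists>g\<in>A. \<forall>i\<in>F. \<bar>g i - f i\<bar> < r))"
proof
  assume f: "f \<in> closure A"
  show "\<forall>F r. finite F \<and> r > 0 \<longrightarrow> (\<exists>g\<in>A. \<forall>i\<in>F. \<bar>g i - f i\<bar> < r)"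
  proof (intro allI impI)
    fix F :: "'b set" and r :: real assume Fr: "finite F \<and> r > 0"
    define V where "V = {g::'b \<Rightarrow> real. \<forall>i\<in>F. g (id i) \<in> ball (f i) r}"
    have "open V" unfolding V_def by (rule product_topology_basis') (use Fr in auto)
    moreover have "f \<in> V" unfolding V_def using Fr by auto
    ultimately have "A \<inter> V \<noteq> {}" using f unfolding closure_iff_nhds_not_empty by blast
    then obtain g where "g \<in> A" and "\<forall>i\<in>F. dist (g i) (f i) < r"
      unfolding V_def by (auto simp: dist_commute)
    then show "\<exists>g\<in>A. \<forall>i\<in>F. \<bar>g i - f i\<bar> < r" by (auto simp: dist_real_def)
  qed
next
  assume box: "\<forall>F r. finite F \<and> r > 0 \<longrightarrow> (\<exists>g\<in>A. \<forall>i\<in>F. \<bar>g i - f i\<bar> < r)"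
  show "f \<in> closure A" unfolding closure_iff_nhds_not_empty
  proof (intro allI impI)
    fix T S assume ST: "S \<subseteq> T" and S: "open S" "f \<in> S"
    obtain F r where Fr: "finite F" "r > 0" and inS: "\<And>g. \<forall>i\<in>F. \<bar>g i - f i\<bar> < r \<Longrightarrow> g \<in> S"
      using open_fun_contains_box[OF S] by blast
    obtain g where "g \<in> A" "\<forall>i\<in>F. \<bar>g i - f i\<bar> < r" using box Fr by blast
    then have "g \<in> A \<inter> T" using inS ST by blast
    then show "A \<inter> T \<noteq> {}" by blast
  qed
qed

lemma fconv_hull_perturb:
  fixes L L' :: "nat \<Rightarrow> 'b \<Rightarrow> real"
  assumes g: "g \<in> fconv_hull {L n | n. n \<ge> M}" and "m \<le> M"
    and close: "\<And>n i. n \<ge> M \<Longrightarrow> i \<in> F \<Longrightarrow> \<bar>L' n i - L n i\<bar> \<le> r"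
  shows "\<exists>g'\<in>fconv_hull {L' n | n. n \<ge> m}. \<forall>i\<in>F. \<bar>g' i - g i\<bar> \<le> r"
proof -
  from g obtain N :: nat and c :: "nat \<Rightarrow> real" and Lk :: "nat \<Rightarrow> 'b \<Rightarrow> real"
    where c: "\<forall>k<N. c k \<ge> 0 \<and> Lk k \<in> {L n | n. n \<ge> M}" "(\<Sum>k<N. c k) = 1"
      and g_eq: "g = (\<lambda>\<phi>. \<Sum>k<N. c k * Lk k \<phi>)"
    unfolding fconv_hull_def by blast
  have "\<forall>k<N. \<exists>n. n \<ge> M \<and> Lk k = L n" using c(1) by blast
  then obtain nk where nk: "\<And>k. k < N \<Longrightarrow> nk k \<ge> M \<and> Lk k = L (nk k)" by metis
  define g' where "g' = (\<lambda>\<phi>. \<Sum>k<N. c k * L' (nk k) \<phi>)"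
  have "g' \<in> fconv_hull {L' n | n. n \<ge> m}"
    unfolding fconv_hull_def g'_def
  proof (rule CollectI, intro exI conjI)
    show "\<forall>k<N. 0 \<le> c k \<and> L' (nk k) \<in> {L' n |n. m \<le> n}"
      using c(1) nk \<open>m \<le> M\<close> by fastforce
  qed (use c(2) in auto)
  moreover have "\<bar>g' i - g i\<bar> \<le> r" if i: "i \<in> F" for i
  proof -
    have "g i = (\<Sum>k<N. c k * L (nk k) i)" unfolding g_eq by (rule sum.cong) (auto simp: nk)
    then have "\<bar>g' i - g i\<bar> = \<bar>\<Sum>k<N. c k * (L' (nk k) i - L (nk k) i)\<bar>"
      unfolding g'_def by (simp add: sum_subtractf[symmetric] right_diff_distrib)
    also have "\<dots> \<le> (\<Sum>k<N. c k * \<bar>L' (nk k) i - L (nk k) i\<bar>)"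
      by (rule order_trans[OF sum_abs]) (use c(1) in \<open>simp add: abs_mult\<close>)
    also have "\<dots> \<le> (\<Sum>k<N. c k * r)"
      using c(1) nk close[OF _ i] by (intro sum_mono mult_left_mono) auto
    also have "\<dots> = r" using c(2) by (simp add: sum_distrib_right[symmetric])
    finally show ?thesis .
  qed
  ultimately show ?thesis by blast
qed

lemma tail_hull_closure_transfer:
  fixes L L' :: "nat \<Rightarrow> 'b \<Rightarrow> real"
  assumes lim: "\<And>i. (\<lambda>n. L' n i - L n i) \<longlonglongrightarrow> 0"
    and cl: "\<And>m. f \<in> closure (fconv_hull {L n | n. n \<ge> m})"
  shows "f \<in> closure (fconv_hull {L' n | n. n \<ge> m})"
  unfolding closure_fun_iff_box
proof (intro allI impI)
  fix F :: "'b set" and r :: real assume Fr: "finite F \<and> r > 0"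
  have r2: "r/2 > 0" using Fr by simp
  have "\<forall>\<^sub>F n in sequentially. \<forall>i\<in>F. \<bar>L' n i - L n i\<bar> < r/2"
  proof (intro eventually_ball_finite ballI)
    fix i
    have "\<forall>e>0. \<forall>\<^sub>F n in sequentially. \<bar>L' n i - L n i\<bar> < e"
      using lim[of i] by (simp add: tendsto_iff dist_real_def)
    then show "\<forall>\<^sub>F n in sequentially. \<bar>L' n i - L n i\<bar> < r/2" using r2 by blast
  qed (use Fr in simp)
  then obtain m' where m': "\<And>n i. n \<ge> m' \<Longrightarrow> i \<in> F \<Longrightarrow> \<bar>L' n i - L n i\<bar> < r/2"
    by (auto simp: eventually_sequentially)
  define M where "M = max m m'"
  obtain g where g: "g \<in> fconv_hull {L n | n. n \<ge> M}" "\<forall>i\<in>F. \<bar>g i - f i\<bar> < r/2"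
    using cl[of M] Fr r2 unfolding closure_fun_iff_box by blast
  have close: "\<bar>L' n i - L n i\<bar> \<le> r/2" if "n \<ge> M" "i \<in> F" for n i
    using m'[of n i] that unfolding M_def by simp
  obtain g' where g': "g' \<in> fconv_hull {L' n | n. n \<ge> m}" "\<forall>i\<in>F. \<bar>g' i - g i\<bar> \<le> r/2"
    using fconv_hull_perturb[OF g(1) _ close, of m] unfolding M_def by auto
  have "\<bar>g' i - f i\<bar> < r" if "i \<in> F" for i
  proof -
    have "\<bar>g i - f i\<bar> < r/2" "\<bar>g' i - g i\<bar> \<le> r/2" using g(2) g'(2) that by auto
    then show ?thesis by linarith
  qed
  then show "\<exists>g\<in>fconv_hull {L' n | n. n \<ge> m}. \<forall>i\<in>F. \<bar>g i - f i\<bar> < r" using g'(1) by blast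
qed

lemma tail_hulls_eq:
  fixes L L' :: "nat \<Rightarrow> ('a::euclidean_space \<Rightarrow> 'a) \<Rightarrow> real"
  assumes lim: "\<And>\<phi>. (\<lambda>n. L n \<phi> - L' n \<phi>) \<longlonglongrightarrow> 0"
  shows "(\<Inter>m. wstar_cch {L n | n. n \<ge> m}) = (\<Inter>m. wstar_cch {L' n | n. n \<ge> m})"
proof -
  have sub: "(\<Inter>m. wstar_cch {L1 n | n. n \<ge> m}) \<subseteq> (\<Inter>m. wstar_cch {L2 n | n. n \<ge> m})"
    if "\<And>\<phi>. (\<lambda>n. L2 n \<phi> - L1 n \<phi>) \<longlonglongrightarrow> 0" for L1 L2 :: "nat \<Rightarrow> ('a \<Rightarrow> 'a) \<Rightarrow> real"
    using tail_hull_closure_transfer[of L2 L1, OF that] by (auto simp: wstar_cch_def)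
  have lim': "(\<lambda>n. L' n \<phi> - L n \<phi>) \<longlonglongrightarrow> 0" for \<phi>
    using tendsto_minus[OF lim[of \<phi>]] by simp
  show ?thesis by (intro subset_antisym sub lim lim')
qed

section \<open>Measures with finite second moment and their couplings\<close>

lemma P2D:
  assumes "\<mu> \<in> P2"
  shows "prob_space \<mu>" "sets \<mu> = sets borel" "integrable \<mu> (\<lambda>x. norm x ^ 2)"
  using assms by (auto simp: P2_def)

lemma measurable_sets_borel:
  assumes "sets M = sets borel" "f \<in> borel_measurable borel"
  shows "f \<in> borel_measurable M"
  by (subst measurable_cong_sets[OF assms(1) refl]) (rule assms(2))

text \<open>Finite second moment implies finite first moment, since \<open>\<bar>x\<bar> \<le> 1 + \<bar>x\<bar>\<^sup>2\<close>.\<close>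
lemma P2_integrable_id:
  assumes "\<mu> \<in> P2"
  shows "integrable \<mu> (\<lambda>x. x)"
proof -
  interpret prob_space \<mu> using P2D(1)[OF assms] .
  have "integrable \<mu> (\<lambda>x. 1 + norm x ^ 2)" using P2D(3)[OF assms] by simp
  then show ?thesis
  proof (rule Bochner_Integration.integrable_bound)
    show "(\<lambda>x. x) \<in> borel_measurable \<mu>" using P2D(2)[OF assms] by (simp add: measurable_ident_sets)
    have "t \<le> 1 + t\<^sup>2" for t :: real
      using zero_le_power2[of "t - 1/2"] by (simp add: power2_eq_square algebra_simps)
    then show "AE x in \<mu>. norm x \<le> norm (1 + norm x ^ 2)" by auto
  qed
qed

text \<open>Unfolding couplings; the product \<open>\<sigma>\<close>-algebra of Borel sets is the Borel \<open>\<sigma>\<close>-algebra of the product.\<close>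
lemma couplingD:
  assumes "\<gamma> \<in> couplings \<mu> \<nu>"
  shows "prob_space \<gamma>" "sets \<gamma> = sets (borel :: ('a::euclidean_space \<times> 'a) measure)"
    "distr \<gamma> borel fst = \<mu>" "distr \<gamma> borel snd = \<nu>"
proof -
  have "sets \<gamma> = sets (borel \<Otimes>\<^sub>M (borel::'a measure))" using assms by (simp add: couplings_def)
  then show "sets \<gamma> = sets (borel :: ('a \<times> 'a) measure)" by (simp only: borel_prod)
qed (use assms in \<open>simp_all add: couplings_def\<close>)

lemma coupling_measurable:
  assumes "\<gamma> \<in> couplings \<mu> \<nu>" "F \<in> borel_measurable borel"
  shows "F \<in> borel_measurable \<gamma>"
  using measurable_sets_borel[OF couplingD(2)[OF assms(1)] assms(2)] .

lemma coupling_fst_snd_measurable: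
  assumes "\<gamma> \<in> couplings \<mu> \<nu>"
  shows "fst \<in> measurable \<gamma> borel" "snd \<in> measurable \<gamma> borel"
  by (rule coupling_measurable[OF assms], intro borel_measurable_continuous_onI continuous_intros)+

lemma coupling_marginal_integral:
  fixes g :: "'a::euclidean_space \<Rightarrow> 'b::{banach, second_countable_topology}"
  assumes "\<gamma> \<in> couplings \<mu> \<nu>" and g: "g \<in> borel_measurable borel"
  shows "integrable \<mu> g \<longleftrightarrow> integrable \<gamma> (\<lambda>p. g (fst p))"
    "integral\<^sup>L \<mu> g = (\<integral>p. g (fst p) \<partial>\<gamma>)"
    "integrable \<nu> g \<longleftrightarrow> integrable \<gamma> (\<lambda>p. g (snd p))"
    "integral\<^sup>L \<nu> g = (\<integral>p. g (snd p) \<partial>\<gamma>)"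
  using integrable_distr_eq[OF coupling_fst_snd_measurable(1)[OF assms(1)] g]
    integral_distr[OF coupling_fst_snd_measurable(1)[OF assms(1)] g]
    integrable_distr_eq[OF coupling_fst_snd_measurable(2)[OF assms(1)] g]
    integral_distr[OF coupling_fst_snd_measurable(2)[OF assms(1)] g]
    couplingD(3,4)[OF assms(1)] by auto

text \<open>For a coupling of two measures in \<open>P2\<close>, both coordinates and the transport integrand
  \<open>\<bar>x - y\<bar>\<^sup>2 \<le> 2\<bar>x\<bar>\<^sup>2 + 2\<bar>y\<bar>\<^sup>2\<close> are integrable.\<close>
lemma coupling_P2_integrable:
  assumes "\<gamma> \<in> couplings \<mu> \<nu>" "\<mu> \<in> P2" "\<nu> \<in> P2"
  shows "integrable \<gamma> fst" "integrable \<gamma> snd" "integrable \<gamma> (\<lambda>p. norm (fst p - snd p) ^ 2)"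
proof -
  have m1: "(\<lambda>x::'a. x) \<in> borel_measurable borel" by (rule measurable_ident_sets) simp
  have m2: "(\<lambda>x::'a. norm x ^ 2) \<in> borel_measurable borel"
    by (intro borel_measurable_continuous_onI continuous_intros)
  show "integrable \<gamma> fst"
    using coupling_marginal_integral(1)[OF assms(1) m1] P2_integrable_id[OF assms(2)]
    by (simp only: eta_contract_eq)
  show "integrable \<gamma> snd"
    using coupling_marginal_integral(3)[OF assms(1) m1] P2_integrable_id[OF assms(3)]
    by (simp only: eta_contract_eq)
  have "integrable \<gamma> (\<lambda>p. norm (fst p) ^ 2)"
    using coupling_marginal_integral(1)[OF assms(1) m2] P2D(3)[OF assms(2)] by blast
  moreover have "integrable \<gamma> (\<lambda>p. norm (snd p) ^ 2)"
    using coupling_marginal_integral(3)[OF assms(1) m2] P2D(3)[OF assms(3)] by blast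
  ultimately have "integrable \<gamma> (\<lambda>p. 2 * norm (fst p) ^ 2 + 2 * norm (snd p) ^ 2)" by simp
  then show "integrable \<gamma> (\<lambda>p. norm (fst p - snd p) ^ 2)"
  proof (rule Bochner_Integration.integrable_bound)
    show "(\<lambda>p. norm (fst p - snd p) ^ 2) \<in> borel_measurable \<gamma>"
      by (rule coupling_measurable[OF assms(1)]) (intro borel_measurable_continuous_onI continuous_intros)
    have "norm (x - y) ^ 2 \<le> 2 * norm x ^ 2 + 2 * norm y ^ 2" for x y :: 'a
    proof -
      have "norm (x - y) ^ 2 \<le> (norm x + norm y)^2"
        by (rule power_mono[OF norm_triangle_ineq4]) simp
      also have "\<dots> \<le> 2 * norm x ^ 2 + 2 * norm y ^ 2"
        using zero_le_power2[of "norm x - norm y"] by (simp add: power2_eq_square algebra_simps)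
      finally show ?thesis .
    qed
    then show "AE p in \<gamma>. norm (norm (fst p - snd p) ^ 2) \<le> norm (2 * norm (fst p) ^ 2 + 2 * norm (snd p) ^ 2)"
      by simp
  qed
qed

text \<open>The product measure is a coupling; in particular the set of couplings is never empty.\<close>
lemma product_coupling:
  assumes "\<mu> \<in> P2" "\<nu> \<in> P2"
  shows "\<mu> \<Otimes>\<^sub>M \<nu> \<in> couplings \<mu> \<nu>"
proof -
  interpret M: prob_space \<mu> using P2D(1)[OF assms(1)] .
  interpret N: prob_space \<nu> using P2D(1)[OF assms(2)] .
  have sets: "sets (\<mu> \<Otimes>\<^sub>M \<nu>) = sets (borel \<Otimes>\<^sub>M borel)"
    using P2D(2)[OF assms(1)] P2D(2)[OF assms(2)] by (rule sets_pair_measure_cong)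
  have "distr (\<mu> \<Otimes>\<^sub>M \<nu>) borel fst = distr (\<mu> \<Otimes>\<^sub>M \<nu>) \<mu> fst"
    by (rule distr_cong) (use P2D(2)[OF assms(1)] in auto)
  also have "\<dots> = \<mu>" by (rule N.distr_pair_fst)
  finally have fst_marginal: "distr (\<mu> \<Otimes>\<^sub>M \<nu>) borel fst = \<mu>" .
  have "distr (\<mu> \<Otimes>\<^sub>M \<nu>) borel snd = distr (\<mu> \<Otimes>\<^sub>M \<nu>) \<nu> snd"
    by (rule distr_cong) (use P2D(2)[OF assms(2)] in auto)
  also have "\<dots> = \<nu>"
  proof (intro measure_eqI)
    fix A assume A: "A \<in> sets (distr (\<mu> \<Otimes>\<^sub>M \<nu>) \<nu> snd)"
    then have "emeasure (distr (\<mu> \<Otimes>\<^sub>M \<nu>) \<nu> snd) A = emeasure (\<mu> \<Otimes>\<^sub>M \<nu>) (space \<mu> \<times> A)"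
      by (auto simp add: emeasure_distr space_pair_measure dest: sets.sets_into_space
          intro!: arg_cong2[where f=emeasure])
    with A show "emeasure (distr (\<mu> \<Otimes>\<^sub>M \<nu>) \<nu> snd) A = emeasure \<nu> A"
      by (simp add: N.emeasure_pair_measure_Times M.emeasure_space_1)
  qed simp
  finally have snd_marginal: "distr (\<mu> \<Otimes>\<^sub>M \<nu>) borel snd = \<nu>" .
  show ?thesis unfolding couplings_def
    by (intro CollectI conjI sets fst_marginal snd_marginal prob_space_pair
        M.prob_space_axioms N.prob_space_axioms)
qed

lemma transport_cost_nonneg: "0 \<le> transport_cost \<gamma>"
  unfolding transport_cost_def by (rule Bochner_Integration.integral_nonneg) simp

text \<open>Squaring \<open>W\<^sub>2 \<le> C t\<close>; a coupling is assumed so that the infimum \<open>W2sq\<close> is over a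
  nonempty set and hence nonnegative.\<close>
lemma W2sq_le_of_W2_le:
  assumes "\<gamma> \<in> couplings \<mu> \<nu>" "W2 \<mu> \<nu> \<le> C * t"
  shows "W2sq \<mu> \<nu> \<le> C\<^sup>2 * t\<^sup>2"
proof -
  have ne: "transport_cost ` couplings \<mu> \<nu> \<noteq> {}" using assms(1) by blast
  have W2sq_nonneg: "0 \<le> W2sq \<mu> \<nu>" unfolding W2sq_def
    by (rule cInf_greatest[OF ne]) (auto simp: transport_cost_nonneg)
  then have "W2sq \<mu> \<nu> = (W2 \<mu> \<nu>)\<^sup>2" unfolding W2_def by simp
  also have "\<dots> \<le> (C * t)\<^sup>2" using assms(2) W2sq_nonneg unfolding W2_def by (intro power_mono) auto
  finally show ?thesis by (simp add: power_mult_distrib)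
qed

text \<open>The infimum need not be attained, but there is always a coupling whose cost exceeds
  \<open>W\<^sub>2\<^sup>2\<close> by at most \<open>t\<^sup>2\<close>.\<close>
lemma near_optimal_coupling:
  assumes "\<mu> \<in> P2" "\<nu> \<in> P2" "W2 \<mu> \<nu> \<le> C * t" "t > 0"
  obtains \<gamma> where "\<gamma> \<in> couplings \<mu> \<nu>" "transport_cost \<gamma> \<le> (C\<^sup>2 + 1) * t\<^sup>2"
proof -
  have \<gamma>0: "\<mu> \<Otimes>\<^sub>M \<nu> \<in> couplings \<mu> \<nu>" by (rule product_coupling[OF assms(1,2)])
  then have ne: "transport_cost ` couplings \<mu> \<nu> \<noteq> {}" by blast
  have "Inf (transport_cost ` couplings \<mu> \<nu>) < W2sq \<mu> \<nu> + t\<^sup>2" unfolding W2sq_def using assms(4) by simp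
  from cInf_lessD[OF ne this] obtain \<gamma> where "\<gamma> \<in> couplings \<mu> \<nu>" "transport_cost \<gamma> < W2sq \<mu> \<nu> + t\<^sup>2"
    by blast
  then show thesis using W2sq_le_of_W2_le[OF \<gamma>0 assms(3)] by (intro that) (auto simp: algebra_simps)
qed

text \<open>A bounded uniformly continuous map is, up to \<open>\<epsilon>\<close>, controlled by any power of the distance:
  either \<open>x, y\<close> are \<open>\<delta>\<close>-close, or \<open>(\<bar>x - y\<bar>/\<delta>)\<^sup>p \<ge> 1\<close> dominates the oscillation \<open>2B\<close>.\<close>
lemma uniformly_continuous_power_bound:
  fixes h :: "'a::real_normed_vector \<Rightarrow> 'b::real_normed_vector"
  assumes uc: "uniformly_continuous_on UNIV h" and B: "\<And>x. norm (h x) \<le> B" and "\<epsilon> > 0"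
  obtains \<delta> where "\<delta> > 0" "\<And>x y. norm (h x - h y) \<le> \<epsilon> + (2*B/\<delta>^p) * norm (x - y)^p"
proof -
  obtain \<delta> where \<delta>: "\<delta> > 0" "\<And>x y. dist y x < \<delta> \<Longrightarrow> dist (h y) (h x) < \<epsilon>"
    using uc \<open>\<epsilon> > 0\<close> unfolding uniformly_continuous_on_def by blast
  have B0: "0 \<le> B" using B[of 0] norm_ge_zero order_trans by blast
  show thesis
  proof (rule that[OF \<delta>(1)])
    fix x y :: 'a
    have tail: "0 \<le> (2*B/\<delta>^p) * norm (x - y)^p" using B0 \<delta>(1) by simp
    show "norm (h x - h y) \<le> \<epsilon> + (2*B/\<delta>^p) * norm (x - y)^p"
    proof (cases "norm (x - y) < \<delta>")
      case True
      then have "norm (h x - h y) < \<epsilon>" using \<delta>(2)[of x y] by (simp add: dist_norm norm_minus_commute)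
      then show ?thesis using tail by simp
    next
      case False
      have "norm (h x - h y) \<le> 2 * B"
        using norm_triangle_ineq4[of "h x" "h y"] B[of x] B[of y] by simp
      also have "\<dots> = (2*B/\<delta>^p) * \<delta>^p" using \<delta>(1) by simp
      also have "\<dots> \<le> (2*B/\<delta>^p) * norm (x - y)^p"
        using False B0 \<delta>(1) by (intro mult_left_mono power_mono) auto
      finally show ?thesis using \<open>\<epsilon> > 0\<close> by simp
    qed
  qed
qed

lemma compact_support_bounded:
  fixes h :: "'a::euclidean_space \<Rightarrow> 'b::real_normed_vector"
  assumes "continuous_on UNIV h" "compact K" "\<And>x. x \<notin> K \<Longrightarrow> h x = 0"
  shows "\<exists>B. \<forall>x. norm (h x) \<le> B"
proof -
  have "compact (h ` K)"
    by (rule compact_continuous_image[OF continuous_on_subset[OF assms(1)] assms(2)]) simp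
  from compact_imp_bounded[OF this] obtain B where B: "\<forall>y\<in>h ` K. norm y \<le> B"
    unfolding bounded_iff by blast
  have "norm (h x) \<le> max B 0" for x
    using B assms(3)[of x] by (cases "x \<in> K") auto
  then show ?thesis by blast
qed

text \<open>\<dots> and uniformly continuous (Heine--Cantor on a neighbourhood of the support).\<close>
lemma compact_support_uniformly_continuous:
  fixes h :: "'a::euclidean_space \<Rightarrow> 'b::real_normed_vector"
  assumes "continuous_on UNIV h" "compact K" "\<And>x. x \<notin> K \<Longrightarrow> h x = 0"
  shows "uniformly_continuous_on UNIV h"
  unfolding uniformly_continuous_on_def
proof (intro allI impI)
  obtain R where R: "\<forall>x\<in>K. norm x \<le> R" using compact_imp_bounded[OF assms(2)] unfolding bounded_iff by blast
  define K' where "K' = cball (0::'a) (R + 1)"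
  have "uniformly_continuous_on K' h"
    unfolding K'_def by (rule compact_uniformly_continuous[OF continuous_on_subset[OF assms(1)]]) simp_all
  moreover fix e :: real assume e: "e > 0"
  ultimately obtain d where d: "d > 0" "\<forall>x\<in>K'. \<forall>x'\<in>K'. dist x' x < d \<longrightarrow> dist (h x') (h x) < e"
    unfolding uniformly_continuous_on_def by blast
  show "\<exists>d>0. \<forall>x\<in>UNIV. \<forall>x'\<in>UNIV. dist x' x < d \<longrightarrow> dist (h x') (h x) < e"
  proof (intro exI[of _ "min d 1"] conjI ballI impI)
    fix x x' :: 'a assume dx: "dist x' x < min d 1"
    show "dist (h x') (h x) < e"
    proof (cases "x \<in> K \<or> x' \<in> K")
      case False then show ?thesis using assms(3) e by auto
    next
      case True
      have "norm x \<le> R \<or> norm x' \<le> R" using True R by blast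
      moreover have "\<bar>norm x - norm x'\<bar> < 1"
        using dx norm_triangle_ineq3[of x x'] by (simp add: dist_norm norm_minus_commute)
      ultimately have "x \<in> K' \<and> x' \<in> K'" unfolding K'_def by auto
      moreover have "dist x' x < d" using dx by simp
      ultimately show ?thesis using d(2) by blast
    qed
  qed (use d in auto)
qed

lemma Cc_uniformly_continuous:
  assumes "\<phi> \<in> Cc"
  shows "uniformly_continuous_on UNIV \<phi>" "\<exists>B. \<forall>x. norm (\<phi> x) \<le> B" "continuous_on UNIV \<phi>"
proof -
  have c: "continuous_on UNIV \<phi>" "compact (closure {x. \<phi> x \<noteq> 0})" using assms by (auto simp: Cc_def)
  have "\<phi> x = 0" if "x \<notin> closure {x. \<phi> x \<noteq> 0}" for x
    using contra_subsetD[OF closure_subset that] by simp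
  then show "uniformly_continuous_on UNIV \<phi>" "\<exists>B. \<forall>x. norm (\<phi> x) \<le> B"
    using compact_support_uniformly_continuous[OF c] compact_support_bounded[OF c] by blast+
  show "continuous_on UNIV \<phi>" by (rule c(1))
qed

lemma Cc_measurable: "\<phi> \<in> Cc \<Longrightarrow> \<phi> \<in> borel_measurable borel"
  by (rule borel_measurable_continuous_onI[OF Cc_uniformly_continuous(3)])

definition cutoff :: "real \<Rightarrow> 'a::real_normed_vector \<Rightarrow> real" where
  "cutoff R x = max 0 (min 1 (R + 1 - norm x))"

lemma cutoff_props:
  "cutoff R x \<le> 1" "\<bar>cutoff R x\<bar> \<le> 1"
  "norm x \<le> R \<Longrightarrow> cutoff R x = 1" "R + 1 \<le> norm x \<Longrightarrow> cutoff R x = 0"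
  unfolding cutoff_def by auto

lemma cutoff_lipschitz: "\<bar>cutoff R x - cutoff R y\<bar> \<le> norm (x - y)"
  using norm_triangle_ineq3[of x y] unfolding cutoff_def by (auto simp: max_def min_def split: if_splits)

lemma cutoff_uniformly_continuous: "uniformly_continuous_on UNIV (cutoff R)"
  unfolding uniformly_continuous_on_def
proof (intro allI impI)
  fix e :: real assume "e > 0"
  then show "\<exists>d>0. \<forall>x\<in>UNIV. \<forall>x'\<in>UNIV. dist x' x < d \<longrightarrow> dist (cutoff R x') (cutoff R x) < e"
    by (intro exI[of _ e]) (auto simp: dist_norm intro: le_less_trans[OF cutoff_lipschitz])
qed

lemma cutoff_continuous: "continuous_on UNIV (cutoff R)"
  by (rule uniformly_continuous_imp_continuous[OF cutoff_uniformly_continuous])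

lemma integrable_scaleR_bounded:
  fixes f :: "'b \<Rightarrow> 'a::euclidean_space"
  assumes "integrable M f" "h \<in> borel_measurable M" "\<And>x. \<bar>h x\<bar> \<le> B"
  shows "integrable M (\<lambda>x. h x *\<^sub>R f x)"
proof -
  have "integrable M (\<lambda>x. B *\<^sub>R f x)" using assms(1) by simp
  then show ?thesis
  proof (rule Bochner_Integration.integrable_bound)
    show "(\<lambda>x. h x *\<^sub>R f x) \<in> borel_measurable M"
      using assms(1,2) by (simp add: borel_measurable_integrable)
    show "AE x in M. norm (h x *\<^sub>R f x) \<le> norm (B *\<^sub>R f x)"
      using assms(3) by (auto intro!: mult_right_mono order_trans[OF _ abs_ge_self])
  qed
qed

lemma integrable_inner_bounded:
  fixes f g :: "'b \<Rightarrow> 'a::euclidean_space"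
  assumes "integrable M f" "g \<in> borel_measurable M" "\<And>x. norm (g x) \<le> B"
  shows "integrable M (\<lambda>x. g x \<bullet> f x)"
proof -
  have "integrable M (\<lambda>x. B *\<^sub>R f x)" using assms(1) by simp
  then show ?thesis
  proof (rule Bochner_Integration.integrable_bound)
    show "(\<lambda>x. g x \<bullet> f x) \<in> borel_measurable M"
      using assms(1,2) by (simp add: borel_measurable_integrable)
    show "AE x in M. norm (g x \<bullet> f x) \<le> norm (B *\<^sub>R f x)"
    proof (intro AE_I2)
      fix x
      have "norm (g x \<bullet> f x) \<le> norm (g x) * norm (f x)" by (simp add: Cauchy_Schwarz_ineq2)
      also have "\<dots> \<le> \<bar>B\<bar> * norm (f x)" using assms(3)[of x] by (intro mult_right_mono) auto
      finally show "norm (g x \<bullet> f x) \<le> norm (B *\<^sub>R f x)" by simp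
    qed
  qed
qed

lemma integrable_Cc_inner:
  fixes f :: "'b \<Rightarrow> 'a::euclidean_space"
  assumes "\<phi> \<in> Cc" "integrable M f" "v \<in> measurable M borel"
  shows "integrable M (\<lambda>p. \<phi> (v p) \<bullet> f p)"
proof -
  obtain B where B: "\<And>x. norm (\<phi> x) \<le> B" using Cc_uniformly_continuous(2)[OF assms(1)] by blast
  show ?thesis
    by (rule integrable_inner_bounded[OF assms(2) measurable_compose[OF assms(3) Cc_measurable[OF assms(1)]] B])
qed

lemma integral_abs_le_affine:
  fixes F D :: "'b \<Rightarrow> real"
  assumes "prob_space M" "integrable M F" "integrable M D" "\<And>p. \<bar>F p\<bar> \<le> a + k * D p"
  shows "\<bar>\<integral>p. F p \<partial>M\<bar> \<le> a + k * (\<integral>p. D p \<partial>M)"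
proof -
  interpret prob_space M by (rule assms(1))
  have "\<bar>\<integral>p. F p \<partial>M\<bar> \<le> (\<integral>p. \<bar>F p\<bar> \<partial>M)" by (rule integral_abs_bound)
  also have "\<dots> \<le> (\<integral>p. a + k * D p \<partial>M)"
    by (rule integral_mono) (use assms in auto)
  also have "\<dots> = a + k * (\<integral>p. D p \<partial>M)"
    using assms(3) prob_space by simp
  finally show ?thesis .
qed

text \<open>The defining identity of a barycentric projection, stated for bounded continuous scalar
  weights, extends to vector test functions \<open>\<phi> \<in> C\<^sub>c\<close> paired by the inner product: expand
  \<open>\<phi> \<bullet> b\<close> in the basis and apply the identity to the weights \<open>\<phi> \<bullet> i\<close>.\<close>
lemma barycentric_identity_Cc:
  fixes b :: "'a::euclidean_space \<Rightarrow> 'a" and u :: "'c \<Rightarrow> 'a"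
  assumes sM: "sets M = sets borel" and ib: "integrable M b" and iu: "integrable N u"
    and v: "v \<in> measurable N borel"
    and eq: "\<forall>\<psi>\<in>bcont. (\<integral>x. \<psi> x *\<^sub>R b x \<partial>M) = (\<integral>p. \<psi> (v p) *\<^sub>R u p \<partial>N)"
    and \<phi>: "\<phi> \<in> Cc"
  shows "(\<integral>x. \<phi> x \<bullet> b x \<partial>M) = (\<integral>p. \<phi> (v p) \<bullet> u p \<partial>N)"
proof -
  obtain B where B: "\<And>x. norm (\<phi> x) \<le> B" using Cc_uniformly_continuous(2)[OF \<phi>] by blast
  define \<psi> where "\<psi> i x = \<phi> x \<bullet> i" for i x
  have \<psi>_bound: "\<bar>\<psi> i x\<bar> \<le> B" if "i \<in> Basis" for i x
    using Cauchy_Schwarz_ineq2[of "\<phi> x" i] B[of x] that unfolding \<psi>_def by simp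
  have \<psi>_cont: "continuous_on UNIV (\<psi> i)" for i
    unfolding \<psi>_def by (intro continuous_intros Cc_uniformly_continuous(3)[OF \<phi>])
  then have \<psi>_meas: "\<psi> i \<in> borel_measurable borel" for i by (rule borel_measurable_continuous_onI)
  have intM: "integrable M (\<lambda>x. \<psi> i x *\<^sub>R b x)" if "i \<in> Basis" for i
    by (rule integrable_scaleR_bounded[OF ib measurable_sets_borel[OF sM \<psi>_meas] \<psi>_bound[OF that]])
  have intN: "integrable N (\<lambda>p. \<psi> i (v p) *\<^sub>R u p)" if "i \<in> Basis" for i
    by (rule integrable_scaleR_bounded[OF iu measurable_compose[OF v \<psi>_meas] \<psi>_bound[OF that]])
  have "\<psi> i \<in> bcont" if "i \<in> Basis" for i
    using \<psi>_cont \<psi>_bound[OF that] unfolding bcont_def bounded_iff by auto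
  then have coord: "(\<integral>x. \<psi> i x *\<^sub>R b x \<partial>M) \<bullet> i = (\<integral>p. \<psi> i (v p) *\<^sub>R u p \<partial>N) \<bullet> i"
    if "i \<in> Basis" for i
    using eq that by simp
  have expand: "w \<bullet> z = (\<Sum>i\<in>Basis. ((w \<bullet> i) *\<^sub>R z) \<bullet> i)" for w z :: 'a
    using euclidean_inner[of w z] by simp
  have "(\<integral>x. \<phi> x \<bullet> b x \<partial>M) = (\<integral>x. (\<Sum>i\<in>Basis. (\<psi> i x *\<^sub>R b x) \<bullet> i) \<partial>M)"
    unfolding \<psi>_def by (rule Bochner_Integration.integral_cong[OF refl expand])
  also have "\<dots> = (\<Sum>i\<in>Basis. \<integral>x. (\<psi> i x *\<^sub>R b x) \<bullet> i \<partial>M)"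
    by (rule Bochner_Integration.integral_sum, rule integrable_inner_left, rule intM)
  also have "\<dots> = (\<Sum>i\<in>Basis. (\<integral>x. \<psi> i x *\<^sub>R b x \<partial>M) \<bullet> i)"
    by (intro sum.cong refl integral_inner_left intM)
  also have "\<dots> = (\<Sum>i\<in>Basis. (\<integral>p. \<psi> i (v p) *\<^sub>R u p \<partial>N) \<bullet> i)"
    by (intro sum.cong refl coord)
  also have "\<dots> = (\<Sum>i\<in>Basis. \<integral>p. (\<psi> i (v p) *\<^sub>R u p) \<bullet> i \<partial>N)"
    by (intro sum.cong refl integral_inner_left[symmetric] intN)
  also have "\<dots> = (\<integral>p. (\<Sum>i\<in>Basis. (\<psi> i (v p) *\<^sub>R u p) \<bullet> i) \<partial>N)"
    by (rule Bochner_Integration.integral_sum[symmetric], rule integrable_inner_left, rule intN)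
  also have "\<dots> = (\<integral>p. \<phi> (v p) \<bullet> u p \<partial>N)"
    unfolding \<psi>_def by (rule Bochner_Integration.integral_cong[OF refl expand[symmetric]])
  finally show ?thesis .
qed

lemma vmeas_bary_fst:
  fixes \<gamma> :: "('a::euclidean_space \<times> 'a) measure"
  assumes \<gamma>: "\<gamma> \<in> couplings \<mu> \<nu>" and P: "\<mu> \<in> P2" "\<nu> \<in> P2" and b: "is_bary_fst \<gamma> \<mu> b"
    and \<phi>: "\<phi> \<in> Cc"
  shows "vmeas \<mu> (\<lambda>x. (1/t) *\<^sub>R (x - b x)) \<phi>
       = (1/t) * ((\<integral>p. \<phi> (fst p) \<bullet> fst p \<partial>\<gamma>) - (\<integral>p. \<phi> (fst p) \<bullet> snd p \<partial>\<gamma>))"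
proof -
  have sets: "sets \<mu> = sets borel" using P2D(2)[OF P(1)] .
  have ib: "integrable \<mu> b" using b by (simp add: is_bary_fst_def)
  have id_meas: "(\<lambda>x. x) \<in> measurable \<mu> borel" using sets by (simp add: measurable_ident_sets)
  have i1: "integrable \<mu> (\<lambda>x. \<phi> x \<bullet> x)"
    using integrable_Cc_inner[OF \<phi> P2_integrable_id[OF P(1)] id_meas] .
  have i2: "integrable \<mu> (\<lambda>x. \<phi> x \<bullet> b x)"
    using integrable_Cc_inner[OF \<phi> ib id_meas] .
  have "vmeas \<mu> (\<lambda>x. (1/t) *\<^sub>R (x - b x)) \<phi> = (\<integral>x. (1/t) * (\<phi> x \<bullet> x - \<phi> x \<bullet> b x) \<partial>\<mu>)"
    unfolding vmeas_def using \<phi> by (simp add: inner_diff_right)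
  also have "\<dots> = (1/t) * ((\<integral>x. \<phi> x \<bullet> x \<partial>\<mu>) - (\<integral>x. \<phi> x \<bullet> b x \<partial>\<mu>))"
    using i1 i2 by simp
  also have "(\<integral>x. \<phi> x \<bullet> x \<partial>\<mu>) = (\<integral>p. \<phi> (fst p) \<bullet> fst p \<partial>\<gamma>)"
    by (rule coupling_marginal_integral(2)[OF \<gamma>])
      (intro borel_measurable_continuous_onI continuous_intros Cc_uniformly_continuous(3)[OF \<phi>])
  also have "(\<integral>x. \<phi> x \<bullet> b x \<partial>\<mu>) = (\<integral>p. \<phi> (fst p) \<bullet> snd p \<partial>\<gamma>)"
    using b by (intro barycentric_identity_Cc[OF sets ib coupling_P2_integrable(2)[OF \<gamma> P]
        coupling_fst_snd_measurable(1)[OF \<gamma>] _ \<phi>]) (simp add: is_bary_fst_def)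
  finally show ?thesis .
qed

lemma vmeas_bary_snd:
  fixes \<gamma> :: "('a::euclidean_space \<times> 'a) measure"
  assumes \<gamma>: "\<gamma> \<in> couplings \<mu> \<nu>" and P: "\<mu> \<in> P2" "\<nu> \<in> P2" and c: "is_bary_snd \<gamma> \<nu> c"
    and \<phi>: "\<phi> \<in> Cc"
  shows "vmeas \<nu> (\<lambda>y. (1/t) *\<^sub>R (c y - y)) \<phi>
       = (1/t) * ((\<integral>p. \<phi> (snd p) \<bullet> fst p \<partial>\<gamma>) - (\<integral>p. \<phi> (snd p) \<bullet> snd p \<partial>\<gamma>))"
proof -
  have sets: "sets \<nu> = sets borel" using P2D(2)[OF P(2)] .
  have ic: "integrable \<nu> c" using c by (simp add: is_bary_snd_def)
  have id_meas: "(\<lambda>x. x) \<in> measurable \<nu> borel" using sets by (simp add: measurable_ident_sets)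
  have i1: "integrable \<nu> (\<lambda>y. \<phi> y \<bullet> y)"
    using integrable_Cc_inner[OF \<phi> P2_integrable_id[OF P(2)] id_meas] .
  have i2: "integrable \<nu> (\<lambda>y. \<phi> y \<bullet> c y)"
    using integrable_Cc_inner[OF \<phi> ic id_meas] .
  have "vmeas \<nu> (\<lambda>y. (1/t) *\<^sub>R (c y - y)) \<phi> = (\<integral>y. (1/t) * (\<phi> y \<bullet> c y - \<phi> y \<bullet> y) \<partial>\<nu>)"
    unfolding vmeas_def using \<phi> by (simp add: inner_diff_right)
  also have "\<dots> = (1/t) * ((\<integral>y. \<phi> y \<bullet> c y \<partial>\<nu>) - (\<integral>y. \<phi> y \<bullet> y \<partial>\<nu>))"
    using i1 i2 by simp
  also have "(\<integral>y. \<phi> y \<bullet> y \<partial>\<nu>) = (\<integral>p. \<phi> (snd p) \<bullet> snd p \<partial>\<gamma>)"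
    by (rule coupling_marginal_integral(4)[OF \<gamma>])
      (intro borel_measurable_continuous_onI continuous_intros Cc_uniformly_continuous(3)[OF \<phi>])
  also have "(\<integral>y. \<phi> y \<bullet> c y \<partial>\<nu>) = (\<integral>p. \<phi> (snd p) \<bullet> fst p \<partial>\<gamma>)"
    using c by (intro barycentric_identity_Cc[OF sets ic coupling_P2_integrable(1)[OF \<gamma> P]
        coupling_fst_snd_measurable(2)[OF \<gamma>] _ \<phi>]) (simp add: is_bary_snd_def)
  finally show ?thesis .
qed

text \<open>Key identity: the two vector measures differ, on \<open>\<phi>\<close>, by
  \<open>(1/t) \<integral> (\<phi> x - \<phi> y) \<bullet> (x - y) d\<gamma>\<close>, which involves only the coupling.\<close>
lemma vmeas_bary_difference:
  fixes \<gamma> :: "('a::euclidean_space \<times> 'a) measure"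
  assumes \<gamma>: "\<gamma> \<in> couplings \<mu> \<nu>" and P: "\<mu> \<in> P2" "\<nu> \<in> P2" and b: "is_bary_fst \<gamma> \<mu> b"
    and c: "is_bary_snd \<gamma> \<nu> c" and \<phi>: "\<phi> \<in> Cc"
  shows "vmeas \<mu> (\<lambda>x. (1/t) *\<^sub>R (x - b x)) \<phi> - vmeas \<nu> (\<lambda>y. (1/t) *\<^sub>R (c y - y)) \<phi>
     = (1/t) * (\<integral>p. (\<phi> (fst p) - \<phi> (snd p)) \<bullet> (fst p - snd p) \<partial>\<gamma>)"
proof -
  note fst_int = coupling_P2_integrable(1)[OF \<gamma> P] and snd_int = coupling_P2_integrable(2)[OF \<gamma> P]
  note fst_meas = coupling_fst_snd_measurable(1)[OF \<gamma>] and snd_meas = coupling_fst_snd_measurable(2)[OF \<gamma>]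
  have "(\<integral>p. (\<phi> (fst p) - \<phi> (snd p)) \<bullet> (fst p - snd p) \<partial>\<gamma>)
      = (\<integral>p. (\<phi> (fst p) \<bullet> fst p - \<phi> (fst p) \<bullet> snd p) - (\<phi> (snd p) \<bullet> fst p - \<phi> (snd p) \<bullet> snd p) \<partial>\<gamma>)"
    by (rule Bochner_Integration.integral_cong[OF refl]) (simp add: inner_diff_left inner_diff_right)
  also have "\<dots> = ((\<integral>p. \<phi> (fst p) \<bullet> fst p \<partial>\<gamma>) - (\<integral>p. \<phi> (fst p) \<bullet> snd p \<partial>\<gamma>))
      - ((\<integral>p. \<phi> (snd p) \<bullet> fst p \<partial>\<gamma>) - (\<integral>p. \<phi> (snd p) \<bullet> snd p \<partial>\<gamma>))"
    using integrable_Cc_inner[OF \<phi> fst_int fst_meas] integrable_Cc_inner[OF \<phi> snd_int fst_meas]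
      integrable_Cc_inner[OF \<phi> fst_int snd_meas] integrable_Cc_inner[OF \<phi> snd_int snd_meas]
    by simp
  finally show ?thesis
    unfolding vmeas_bary_fst[OF \<gamma> P b \<phi>] vmeas_bary_snd[OF \<gamma> P c \<phi>] by (simp add: right_diff_distrib)
qed

lemma vmeas_bary_difference_bound:
  fixes \<gamma> :: "('a::euclidean_space \<times> 'a) measure"
  assumes \<gamma>: "\<gamma> \<in> couplings \<mu> \<nu>" and P: "\<mu> \<in> P2" "\<nu> \<in> P2" and b: "is_bary_fst \<gamma> \<mu> b"
    and c: "is_bary_snd \<gamma> \<nu> c" and \<phi>: "\<phi> \<in> Cc" and t: "t > 0"
    and pw: "\<And>x y. \<bar>(\<phi> x - \<phi> y) \<bullet> (x - y)\<bar> \<le> a + k * norm (x - y)^2"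
  shows "\<bar>vmeas \<mu> (\<lambda>x. (1/t) *\<^sub>R (x - b x)) \<phi> - vmeas \<nu> (\<lambda>y. (1/t) *\<^sub>R (c y - y)) \<phi>\<bar>
     \<le> (1/t) * (a + k * transport_cost \<gamma>)"
proof -
  obtain B where B: "\<And>x. norm (\<phi> x) \<le> B" using Cc_uniformly_continuous(2)[OF \<phi>] by blast
  have "norm (\<phi> (fst p) - \<phi> (snd p)) \<le> 2 * B" for p
    using norm_triangle_ineq4[of "\<phi> (fst p)" "\<phi> (snd p)"] B[of "fst p"] B[of "snd p"] by simp
  moreover have "(\<lambda>p. \<phi> (fst p) - \<phi> (snd p)) \<in> borel_measurable \<gamma>"
    using measurable_compose[OF coupling_fst_snd_measurable(1)[OF \<gamma>] Cc_measurable[OF \<phi>]]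
      measurable_compose[OF coupling_fst_snd_measurable(2)[OF \<gamma>] Cc_measurable[OF \<phi>]]
    by (rule borel_measurable_diff)
  moreover have "integrable \<gamma> (\<lambda>p. fst p - snd p)"
    using coupling_P2_integrable(1,2)[OF \<gamma> P] by (rule Bochner_Integration.integrable_diff)
  ultimately have "integrable \<gamma> (\<lambda>p. (\<phi> (fst p) - \<phi> (snd p)) \<bullet> (fst p - snd p))"
    by (intro integrable_inner_bounded)
  then have "\<bar>\<integral>p. (\<phi> (fst p) - \<phi> (snd p)) \<bullet> (fst p - snd p) \<partial>\<gamma>\<bar>
      \<le> a + k * (\<integral>p. norm (fst p - snd p)^2 \<partial>\<gamma>)"
    by (rule integral_abs_le_affine[OF couplingD(1)[OF \<gamma>] _ coupling_P2_integrable(3)[OF \<gamma> P] pw])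
  then show ?thesis
    unfolding vmeas_bary_difference[OF \<gamma> P b c \<phi>] transport_cost_def
    using t by (simp add: abs_mult divide_le_cancel)
qed

section \<open>Narrow convergence of the minimizers\<close>

lemma marginal_integral_difference_bound:
  fixes \<gamma> :: "('a::euclidean_space \<times> 'a) measure" and h :: "'a \<Rightarrow> real"
  assumes \<gamma>: "\<gamma> \<in> couplings \<mu> \<nu>" and P: "\<mu> \<in> P2" "\<nu> \<in> P2" and h: "h \<in> borel_measurable borel"
    and B: "\<And>x. \<bar>h x\<bar> \<le> B" and pw: "\<And>x y. \<bar>h x - h y\<bar> \<le> a + k * norm (x - y)^2"
  shows "\<bar>(\<integral>x. h x \<partial>\<nu>) - (\<integral>x. h x \<partial>\<mu>)\<bar> \<le> a + k * transport_cost \<gamma>"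
proof -
  interpret prob_space \<gamma> by (rule couplingD(1)[OF \<gamma>])
  have i_snd: "integrable \<gamma> (\<lambda>p. h (snd p))"
    by (rule integrable_const_bound[where B=B])
      (use B measurable_compose[OF coupling_fst_snd_measurable(2)[OF \<gamma>] h] in auto)
  have i_fst: "integrable \<gamma> (\<lambda>p. h (fst p))"
    by (rule integrable_const_bound[where B=B])
      (use B measurable_compose[OF coupling_fst_snd_measurable(1)[OF \<gamma>] h] in auto)
  have "(\<integral>x. h x \<partial>\<nu>) - (\<integral>x. h x \<partial>\<mu>) = (\<integral>p. h (snd p) - h (fst p) \<partial>\<gamma>)"
    unfolding coupling_marginal_integral(2,4)[OF \<gamma> h] using i_fst i_snd by simp
  also have "\<bar>\<dots>\<bar> \<le> a + k * (\<integral>p. norm (fst p - snd p)^2 \<partial>\<gamma>)"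
  proof (rule integral_abs_le_affine[OF prob_space_axioms _ coupling_P2_integrable(3)[OF \<gamma> P]])
    show "integrable \<gamma> (\<lambda>p. h (snd p) - h (fst p))" using i_fst i_snd by simp
    show "\<bar>h (snd p) - h (fst p)\<bar> \<le> a + k * norm (fst p - snd p)^2" for p
      using pw[of "snd p" "fst p"] by (simp add: norm_minus_commute)
  qed
  finally show ?thesis unfolding transport_cost_def .
qed

lemma uniformly_continuous_integral_gap:
  fixes h :: "'a::euclidean_space \<Rightarrow> real"
  assumes \<gamma>: "\<And>n. \<gamma>s n \<in> couplings (\<mu>s n) (\<nu>s n)" and P: "\<And>n. \<mu>s n \<in> P2" "\<And>n. \<nu>s n \<in> P2"
    and cost: "\<And>n. transport_cost (\<gamma>s n) \<le> K * \<tau> n ^ 2" and \<tau>: "\<tau> \<longlonglongrightarrow> 0"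
    and uc: "uniformly_continuous_on UNIV h" and B: "\<And>x. \<bar>h x\<bar> \<le> B"
  shows "(\<lambda>n. (\<integral>x. h x \<partial>\<nu>s n) - (\<integral>x. h x \<partial>\<mu>s n)) \<longlonglongrightarrow> 0"
  unfolding tendsto_iff
proof (intro allI impI)
  fix e :: real assume e: "e > 0"
  have B0: "0 \<le> B" using B[of 0] by linarith
  obtain \<delta> where \<delta>: "\<delta> > 0" "\<And>x y. norm (h x - h y) \<le> e/2 + (2*B/\<delta>^2) * norm (x - y)^2"
    using uniformly_continuous_power_bound[OF uc, of B "e/2" 2] B e by auto
  have h_meas: "h \<in> borel_measurable borel"
    by (rule borel_measurable_continuous_onI[OF uniformly_continuous_imp_continuous[OF uc]])
  have "(\<lambda>n. (2*B/\<delta>^2) * (K * \<tau> n ^ 2)) \<longlonglongrightarrow> (2*B/\<delta>^2) * (K * 0 ^ 2)"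
    by (intro tendsto_intros \<tau>)
  then have "\<forall>\<^sub>F n in sequentially. (2*B/\<delta>^2) * (K * \<tau> n ^ 2) < e/2"
    by (rule order_tendstoD(2)) (use e in simp)
  then show "\<forall>\<^sub>F n in sequentially. dist ((\<integral>x. h x \<partial>\<nu>s n) - (\<integral>x. h x \<partial>\<mu>s n)) 0 < e"
  proof (rule eventually_mono)
    fix n assume n: "(2*B/\<delta>^2) * (K * \<tau> n ^ 2) < e/2"
    have "\<bar>(\<integral>x. h x \<partial>\<nu>s n) - (\<integral>x. h x \<partial>\<mu>s n)\<bar> \<le> e/2 + (2*B/\<delta>^2) * transport_cost (\<gamma>s n)"
      by (rule marginal_integral_difference_bound[OF \<gamma> P h_meas B]) (use \<delta>(2) in simp)
    also have "\<dots> \<le> e/2 + (2*B/\<delta>^2) * (K * \<tau> n ^ 2)"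
      using cost[of n] B0 \<delta>(1) by (intro add_left_mono mult_left_mono) auto
    finally show "dist ((\<integral>x. h x \<partial>\<nu>s n) - (\<integral>x. h x \<partial>\<mu>s n)) 0 < e" using n by simp
  qed
qed

lemma bounded_continuous_integrable:
  fixes h :: "'a::euclidean_space \<Rightarrow> real"
  assumes "prob_space m" "sets m = sets borel" "continuous_on UNIV h" "\<And>x. \<bar>h x\<bar> \<le> B"
  shows "integrable m h"
proof -
  interpret prob_space m by (rule assms(1))
  show ?thesis
    by (rule integrable_const_bound[where B=B])
      (use assms(4) measurable_sets_borel[OF assms(2) borel_measurable_continuous_onI[OF assms(3)]] in auto)
qed

text \<open>Tightness of a single probability measure, expressed with the cutoffs:
  \<open>\<integral> cutoff R d\<mu> \<rightarrow> 1\<close> as \<open>R \<rightarrow> \<infinity>\<close>, by dominated convergence.\<close>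
lemma integral_cutoff_tendsto_1:
  fixes m :: "'a::euclidean_space measure"
  assumes "prob_space m" "sets m = sets borel"
  shows "(\<lambda>R::nat. \<integral>x. cutoff (real R) x \<partial>m) \<longlonglongrightarrow> 1"
proof -
  interpret prob_space m by (rule assms(1))
  have "(\<lambda>R::nat. \<integral>x. cutoff (real R) x \<partial>m) \<longlonglongrightarrow> (\<integral>x. 1 \<partial>m)"
  proof (rule integral_dominated_convergence[where w="\<lambda>x. 1"])
    show "(\<lambda>x. cutoff (real R) x) \<in> borel_measurable m" for R
      by (rule measurable_sets_borel[OF assms(2) borel_measurable_continuous_onI[OF cutoff_continuous]])
    show "AE x in m. (\<lambda>R. cutoff (real R) x) \<longlonglongrightarrow> 1"
    proof (rule AE_I2)
      fix x :: 'a
      obtain N :: nat where "norm x \<le> real N" using real_arch_simple by blast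
      then have "\<forall>\<^sub>F R in sequentially. cutoff (real R) x = 1"
        unfolding eventually_sequentially by (intro exI[of _ N]) (auto intro!: cutoff_props(3))
      then show "(\<lambda>R. cutoff (real R) x) \<longlonglongrightarrow> 1" by (rule tendsto_eventually)
    qed
    show "AE x in m. norm (cutoff (real R) x) \<le> 1" for R
      by (intro AE_I2) (simp add: cutoff_props(2))
  qed simp_all
  then show ?thesis using prob_space by simp
qed

lemma cutoff_product_uniformly_continuous:
  fixes f :: "'a::euclidean_space \<Rightarrow> real"
  assumes f: "continuous_on UNIV f" "\<And>x. \<bar>f x\<bar> \<le> M"
  shows "uniformly_continuous_on UNIV (\<lambda>x. f x * cutoff R x)" "\<bar>f x * cutoff R x\<bar> \<le> M"
proof -
  show "uniformly_continuous_on UNIV (\<lambda>x. f x * cutoff R x)"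
  proof (rule compact_support_uniformly_continuous[of _ "cball 0 (R + 1)"])
    show "continuous_on UNIV (\<lambda>x. f x * cutoff R x)" by (intro continuous_intros f(1) cutoff_continuous)
    show "f x * cutoff R x = 0" if "x \<notin> cball 0 (R + 1)" for x
      using that cutoff_props(4)[of R x] by simp
  qed simp
  have "0 \<le> M" using f(2)[of x] by linarith
  then show "\<bar>f x * cutoff R x\<bar> \<le> M"
    using mult_mono[OF f(2)[of x] cutoff_props(2)[of R x]] by (simp add: abs_mult)
qed

lemma cutoff_truncation_error:
  fixes f :: "'a::euclidean_space \<Rightarrow> real"
  assumes m: "prob_space m" "sets m = sets borel" and f: "continuous_on UNIV f" "\<And>x. \<bar>f x\<bar> \<le> M"
  shows "\<bar>(\<integral>x. f x \<partial>m) - (\<integral>x. f x * cutoff R x \<partial>m)\<bar> \<le> M * (1 - (\<integral>x. cutoff R x \<partial>m))"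
proof -
  interpret prob_space m by (rule m(1))
  have i_f: "integrable m f" by (rule bounded_continuous_integrable[OF m f])
  have i_g: "integrable m (cutoff R)"
    by (rule bounded_continuous_integrable[OF m cutoff_continuous cutoff_props(2)])
  have i_fg: "integrable m (\<lambda>x. f x * cutoff R x)"
    by (rule bounded_continuous_integrable[OF m _ cutoff_product_uniformly_continuous(2)[OF f]])
      (intro continuous_intros f(1) cutoff_continuous)
  have "\<bar>(\<integral>x. f x \<partial>m) - (\<integral>x. f x * cutoff R x \<partial>m)\<bar> = \<bar>\<integral>x. f x * (1 - cutoff R x) \<partial>m\<bar>"
    using i_f i_fg by (simp add: right_diff_distrib)
  also have "\<dots> \<le> (\<integral>x. \<bar>f x * (1 - cutoff R x)\<bar> \<partial>m)" by (rule integral_abs_bound)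
  also have "\<dots> \<le> (\<integral>x. M * (1 - cutoff R x) \<partial>m)"
  proof (rule integral_mono)
    show "integrable m (\<lambda>x. \<bar>f x * (1 - cutoff R x)\<bar>)" using i_f i_fg by (simp add: right_diff_distrib)
    show "integrable m (\<lambda>x. M * (1 - cutoff R x))" using i_g by simp
    show "\<bar>f x * (1 - cutoff R x)\<bar> \<le> M * (1 - cutoff R x)" for x
      using f(2)[of x] cutoff_props(1)[of R x] by (simp add: abs_mult mult_right_mono)
  qed
  also have "\<dots> = M * (1 - (\<integral>x. cutoff R x \<partial>m))" using i_g prob_space by (simp add: right_diff_distrib)
  finally show ?thesis .
qed

lemma integral_difference_cutoff_bound:
  fixes f :: "'a::euclidean_space \<Rightarrow> real"
  assumes m1: "prob_space m1" "sets m1 = sets borel" and m2: "prob_space m2" "sets m2 = sets borel"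
    and f: "continuous_on UNIV f" "\<And>x. \<bar>f x\<bar> \<le> M"
  shows "\<bar>(\<integral>x. f x \<partial>m1) - (\<integral>x. f x \<partial>m2)\<bar>
    \<le> \<bar>(\<integral>x. f x * cutoff R x \<partial>m1) - (\<integral>x. f x * cutoff R x \<partial>m2)\<bar>
      + M * \<bar>(\<integral>x. cutoff R x \<partial>m1) - (\<integral>x. cutoff R x \<partial>m2)\<bar> + 2 * (M * (1 - (\<integral>x. cutoff R x \<partial>m2)))"
proof -
  have M0: "0 \<le> M" using f(2)[of 0] by linarith
  have "M * (1 - (\<integral>x. cutoff R x \<partial>m1))
      \<le> M * (\<bar>(\<integral>x. cutoff R x \<partial>m1) - (\<integral>x. cutoff R x \<partial>m2)\<bar> + (1 - (\<integral>x. cutoff R x \<partial>m2)))"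
    using M0 by (intro mult_left_mono) auto
  then have "M * (1 - (\<integral>x. cutoff R x \<partial>m1))
      \<le> M * \<bar>(\<integral>x. cutoff R x \<partial>m1) - (\<integral>x. cutoff R x \<partial>m2)\<bar> + M * (1 - (\<integral>x. cutoff R x \<partial>m2))"
    by (simp add: distrib_left)
  then show ?thesis
    using cutoff_truncation_error[OF m1 f, of R] cutoff_truncation_error[OF m2 f, of R] by linarith
qed

text \<open>Towards a Borel probability limit, narrow convergence may be tested on bounded uniformly
  continuous functions only: for a general \<open>f\<close>, the last bound tends to
  \<open>2M(1 - \<integral> cutoff R d\<mu>)\<close>, which is small for large \<open>R\<close> by tightness of \<open>\<mu>\<close>.\<close>
lemma narrow_conv_of_uniformly_continuous:
  fixes \<nu>s :: "nat \<Rightarrow> 'a::euclidean_space measure"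
  assumes \<mu>: "prob_space \<mu>" "sets \<mu> = sets borel"
    and \<nu>s: "\<And>n. prob_space (\<nu>s n)" "\<And>n. sets (\<nu>s n) = sets borel"
    and uc_lim: "\<And>(h :: 'a \<Rightarrow> real) B. uniformly_continuous_on UNIV h \<Longrightarrow> (\<And>x. \<bar>h x\<bar> \<le> B) \<Longrightarrow>
                   (\<lambda>n. \<integral>x. h x \<partial>\<nu>s n) \<longlonglongrightarrow> (\<integral>x. h x \<partial>\<mu>)"
  shows "narrow_conv \<nu>s \<mu>"
  unfolding narrow_conv_def
proof
  fix f :: "'a \<Rightarrow> real" assume "f \<in> bcont"
  then obtain M where f: "continuous_on UNIV f" "\<And>x. \<bar>f x\<bar> \<le> M"
    unfolding bcont_def bounded_iff by auto
  define r where "r N = 2 * (M * (1 - (\<integral>x. cutoff (real N) x \<partial>\<mu>)))" for N :: nat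
  show "(\<lambda>n. \<integral>x. f x \<partial>\<nu>s n) \<longlonglongrightarrow> (\<integral>x. f x \<partial>\<mu>)" unfolding tendsto_iff
  proof (intro allI impI)
    fix e :: real assume e: "e > 0"
    have "r \<longlonglongrightarrow> 2 * (M * (1 - 1))"
      unfolding r_def by (intro tendsto_intros integral_cutoff_tendsto_1[OF \<mu>])
    then have "\<forall>\<^sub>F N in sequentially. r N < e" using e by (intro order_tendstoD(2)) simp_all
    then obtain N where "\<forall>N'\<ge>N. r N' < e" by (auto simp: eventually_sequentially)
    then have rN: "r N < e" by simp
    define g :: "'a \<Rightarrow> real" where "g = cutoff (real N)"
    have "(\<lambda>n. \<integral>x. f x * g x \<partial>\<nu>s n) \<longlonglongrightarrow> (\<integral>x. f x * g x \<partial>\<mu>)"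
      unfolding g_def by (rule uc_lim[OF cutoff_product_uniformly_continuous[OF f]])
    moreover have "(\<lambda>n. \<integral>x. g x \<partial>\<nu>s n) \<longlonglongrightarrow> (\<integral>x. g x \<partial>\<mu>)"
      unfolding g_def by (rule uc_lim[OF cutoff_uniformly_continuous cutoff_props(2)])
    ultimately have "(\<lambda>n. \<bar>(\<integral>x. f x * g x \<partial>\<nu>s n) - (\<integral>x. f x * g x \<partial>\<mu>)\<bar>
          + M * \<bar>(\<integral>x. g x \<partial>\<nu>s n) - (\<integral>x. g x \<partial>\<mu>)\<bar> + r N)
        \<longlonglongrightarrow> \<bar>(\<integral>x. f x * g x \<partial>\<mu>) - (\<integral>x. f x * g x \<partial>\<mu>)\<bar>
          + M * \<bar>(\<integral>x. g x \<partial>\<mu>) - (\<integral>x. g x \<partial>\<mu>)\<bar> + r N"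
      by (intro tendsto_intros)
    then have "\<forall>\<^sub>F n in sequentially. \<bar>(\<integral>x. f x * g x \<partial>\<nu>s n) - (\<integral>x. f x * g x \<partial>\<mu>)\<bar>
          + M * \<bar>(\<integral>x. g x \<partial>\<nu>s n) - (\<integral>x. g x \<partial>\<mu>)\<bar> + r N < e"
      using rN by (intro order_tendstoD(2)) simp_all
    then show "\<forall>\<^sub>F n in sequentially. dist (\<integral>x. f x \<partial>\<nu>s n) (\<integral>x. f x \<partial>\<mu>) < e"
    proof (rule eventually_mono)
      fix n
      show "dist (\<integral>x. f x \<partial>\<nu>s n) (\<integral>x. f x \<partial>\<mu>) < e"
        if "\<bar>(\<integral>x. f x * g x \<partial>\<nu>s n) - (\<integral>x. f x * g x \<partial>\<mu>)\<bar>
          + M * \<bar>(\<integral>x. g x \<partial>\<nu>s n) - (\<integral>x. g x \<partial>\<mu>)\<bar> + r N < e"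
        using integral_difference_cutoff_bound[OF \<nu>s(1,2) \<mu> f, of n "real N"] that
        unfolding dist_real_def g_def r_def by linarith
    qed
  qed
qed

lemma narrow_conv_of_W2_close:
  fixes \<mu>s \<nu>s :: "nat \<Rightarrow> 'a::euclidean_space measure"
  assumes \<tau>_pos: "\<And>n. \<tau> n > 0" and \<tau>: "\<tau> \<longlonglongrightarrow> 0"
    and P: "\<And>n. \<mu>s n \<in> P2" "\<And>n. \<nu>s n \<in> P2" and W: "\<And>n. W2 (\<mu>s n) (\<nu>s n) \<le> C * \<tau> n"
    and \<mu>: "\<mu> \<in> Pborel" and nc: "narrow_conv \<mu>s \<mu>"
  shows "narrow_conv \<nu>s \<mu>"
proof -
  have "\<exists>\<gamma>. \<gamma> \<in> couplings (\<mu>s n) (\<nu>s n) \<and> transport_cost \<gamma> \<le> (C\<^sup>2 + 1) * \<tau> n ^ 2" for n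
    using near_optimal_coupling[OF P(1,2) W \<tau>_pos, of n] by blast
  then obtain \<gamma>s where \<gamma>: "\<And>n. \<gamma>s n \<in> couplings (\<mu>s n) (\<nu>s n)"
    and cost: "\<And>n. transport_cost (\<gamma>s n) \<le> (C\<^sup>2 + 1) * \<tau> n ^ 2" by metis
  show ?thesis
  proof (rule narrow_conv_of_uniformly_continuous)
    show "prob_space \<mu>" "sets \<mu> = sets borel" using \<mu> by (auto simp: Pborel_def)
    show "prob_space (\<nu>s n)" "sets (\<nu>s n) = sets borel" for n using P2D[OF P(2)] by auto
    show "(\<lambda>n. \<integral>x. h x \<partial>\<nu>s n) \<longlonglongrightarrow> (\<integral>x. h x \<partial>\<mu>)"
      if uc: "uniformly_continuous_on UNIV h" and B: "\<And>x. \<bar>h x\<bar> \<le> B" for h :: "'a \<Rightarrow> real" and B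
    proof -
      have "h \<in> bcont" unfolding bcont_def bounded_iff
        using uniformly_continuous_imp_continuous[OF uc] B by auto
      then have "(\<lambda>n. \<integral>x. h x \<partial>\<mu>s n) \<longlonglongrightarrow> (\<integral>x. h x \<partial>\<mu>)" using nc by (simp add: narrow_conv_def)
      from tendsto_add[OF uniformly_continuous_integral_gap[OF \<gamma> P cost \<tau> uc B] this] show ?thesis
        by simp
    qed
  qed
qed

section \<open>Asymptotic equality of the two vector measures\<close>

text \<open>For \<open>\<phi> \<in> C\<^sub>c\<close> and \<open>\<epsilon> > 0\<close>, uniform continuity gives \<open>\<bar>\<phi> x - \<phi> y\<bar> \<le> \<epsilon> + K\<bar>x - y\<bar>\<close>; with
  \<open>\<epsilon> d \<le> \<epsilon> t/2 + \<epsilon> d\<^sup>2/(2t)\<close> this bounds \<open>(\<phi> x - \<phi> y) \<bullet> (x - y)\<close> at every scale \<open>t > 0\<close>.\<close>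
lemma Cc_inner_increment_bound:
  fixes \<phi> :: "'a::euclidean_space \<Rightarrow> 'a"
  assumes \<phi>: "\<phi> \<in> Cc" and \<epsilon>: "\<epsilon> > 0"
  obtains K where "K \<ge> 0"
    "\<And>t x y. t > 0 \<Longrightarrow> \<bar>(\<phi> x - \<phi> y) \<bullet> (x - y)\<bar> \<le> \<epsilon>*t/2 + (\<epsilon>/(2*t) + K) * norm (x - y)^2"
proof -
  obtain B where B: "\<And>x. norm (\<phi> x) \<le> B" using Cc_uniformly_continuous(2)[OF \<phi>] by blast
  obtain \<delta> where \<delta>: "\<delta> > 0" "\<And>x y. norm (\<phi> x - \<phi> y) \<le> \<epsilon> + (2*B/\<delta>^1) * norm (x - y)^1"
    using uniformly_continuous_power_bound[OF Cc_uniformly_continuous(1)[OF \<phi>] B \<epsilon>] by blast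
  define K where "K = 2*B/\<delta>"
  have "B \<ge> 0" using B[of 0] norm_ge_zero[of "\<phi> 0"] by linarith
  then have K: "K \<ge> 0" unfolding K_def using \<delta>(1) by simp
  show thesis
  proof (rule that[OF K])
    fix t :: real and x y :: 'a assume t: "t > 0"
    define d where "d = norm (x - y)"
    have am_gm: "d \<le> t/2 + d^2/(2*t)"
      using zero_le_power2[of "t - d"] t by (simp add: field_simps power2_eq_square)
    have "\<bar>(\<phi> x - \<phi> y) \<bullet> (x - y)\<bar> \<le> norm (\<phi> x - \<phi> y) * d"
      unfolding d_def by (rule Cauchy_Schwarz_ineq2)
    also have "\<dots> \<le> (\<epsilon> + K * d) * d"
      using \<delta>(2)[of x y] unfolding K_def d_def by (intro mult_right_mono) auto
    also have "\<dots> = \<epsilon> * d + K * d^2" by (simp add: algebra_simps power2_eq_square)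
    also have "\<dots> \<le> \<epsilon> * (t/2 + d^2/(2*t)) + K * d^2"
      using am_gm \<epsilon> by (intro add_right_mono mult_left_mono) auto
    also have "\<dots> = \<epsilon>*t/2 + (\<epsilon>/(2*t) + K) * d^2" by (simp add: algebra_simps)
    finally show "\<bar>(\<phi> x - \<phi> y) \<bullet> (x - y)\<bar> \<le> \<epsilon>*t/2 + (\<epsilon>/(2*t) + K) * norm (x - y)^2"
      unfolding d_def .
  qed
qed

text \<open>For one optimal coupling with \<open>W\<^sub>2 \<le> C t\<close>, the two functionals at scale \<open>t\<close> differ on
  \<open>\<phi>\<close> by at most \<open>\<epsilon>(1 + C\<^sup>2)/2 + K C\<^sup>2 t\<close>, since the transport cost is at most \<open>C\<^sup>2 t\<^sup>2\<close>.\<close>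
lemma vmeas_gap_bound:
  fixes \<gamma> :: "('a::euclidean_space \<times> 'a) measure"
  assumes \<gamma>: "\<gamma> \<in> opt_couplings \<mu> \<nu>" and P: "\<mu> \<in> P2" "\<nu> \<in> P2" and W: "W2 \<mu> \<nu> \<le> C * t"
    and t: "t > 0" and b: "is_bary_fst \<gamma> \<mu> b" and c: "is_bary_snd \<gamma> \<nu> c" and \<phi>: "\<phi> \<in> Cc"
    and \<epsilon>: "\<epsilon> > 0" and K: "K \<ge> 0"
    and incr: "\<And>x y. \<bar>(\<phi> x - \<phi> y) \<bullet> (x - y)\<bar> \<le> \<epsilon>*t/2 + (\<epsilon>/(2*t) + K) * norm (x - y)^2"
  shows "\<bar>vmeas \<mu> (\<lambda>x. (1/t) *\<^sub>R (x - b x)) \<phi> - vmeas \<nu> (\<lambda>y. (1/t) *\<^sub>R (c y - y)) \<phi>\<bar>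
    \<le> \<epsilon> * (1 + C\<^sup>2) / 2 + K * C\<^sup>2 * t"
proof -
  have coupling: "\<gamma> \<in> couplings \<mu> \<nu>" using \<gamma> by (simp add: opt_couplings_def)
  have cost: "transport_cost \<gamma> \<le> C\<^sup>2 * t\<^sup>2"
    using \<gamma> W2sq_le_of_W2_le[OF coupling W] by (simp add: opt_couplings_def)
  have k: "\<epsilon>/(2*t) + K \<ge> 0" using \<epsilon> t K by simp
  have "\<bar>vmeas \<mu> (\<lambda>x. (1/t) *\<^sub>R (x - b x)) \<phi> - vmeas \<nu> (\<lambda>y. (1/t) *\<^sub>R (c y - y)) \<phi>\<bar>
      \<le> (1/t) * (\<epsilon>*t/2 + (\<epsilon>/(2*t) + K) * transport_cost \<gamma>)"
    by (rule vmeas_bary_difference_bound[OF coupling P b c \<phi> t incr])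
  also have "\<dots> \<le> (1/t) * (\<epsilon>*t/2 + (\<epsilon>/(2*t) + K) * (C\<^sup>2 * t\<^sup>2))"
    using cost k t by (intro mult_left_mono add_left_mono) auto
  also have "\<dots> = \<epsilon> * (1 + C\<^sup>2) / 2 + K * C\<^sup>2 * t"
    using t by (simp add: field_simps power2_eq_square)
  finally show ?thesis .
qed

text \<open>Second assertion, pointwise: along optimal couplings with \<open>W\<^sub>2 \<le> C\<tau>\<^sub>n\<close>, the functionals
  \<open>(Id - \<bar>\<gamma>\<^sub>n\<bar>)/\<tau>\<^sub>n \<cdot> \<mu>\<^sub>n\<close> and \<open>(\<bar>\<gamma>\<^sub>n\<bar> - Id)/\<tau>\<^sub>n \<cdot> \<nu>\<^sub>n\<close> become equal on each \<open>\<phi>\<close>: choose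
  \<open>\<epsilon> = e/(1 + C\<^sup>2)\<close> in the previous bound and let \<open>\<tau>\<^sub>n \<rightarrow> 0\<close>.\<close>
lemma vmeas_gap_tendsto_zero:
  fixes \<gamma> :: "nat \<Rightarrow> ('a::euclidean_space \<times> 'a) measure"
  assumes \<tau>_pos: "\<And>n. \<tau> n > 0" and \<tau>: "\<tau> \<longlonglongrightarrow> 0"
    and P: "\<And>n. \<mu>s n \<in> P2" "\<And>n. \<nu>s n \<in> P2" and W: "\<And>n. W2 (\<mu>s n) (\<nu>s n) \<le> C * \<tau> n"
    and \<gamma>: "\<And>n. \<gamma> n \<in> opt_couplings (\<mu>s n) (\<nu>s n)"
    and b: "\<And>n. is_bary_fst (\<gamma> n) (\<mu>s n) (b n)" and c: "\<And>n. is_bary_snd (\<gamma> n) (\<nu>s n) (c n)"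
  shows "(\<lambda>n. vmeas (\<mu>s n) (\<lambda>x. (1 / \<tau> n) *\<^sub>R (x - b n x)) \<phi>
            - vmeas (\<nu>s n) (\<lambda>y. (1 / \<tau> n) *\<^sub>R (c n y - y)) \<phi>) \<longlonglongrightarrow> 0"
proof (cases "\<phi> \<in> Cc")
  case False
  then show ?thesis by (simp add: vmeas_def)
next
  case \<phi>: True
  show ?thesis unfolding tendsto_iff
  proof (intro allI impI)
    fix e :: real assume e: "e > 0"
    define \<epsilon> where "\<epsilon> = e / (1 + C\<^sup>2)"
    have "1 + C\<^sup>2 > 0" by (simp add: add_pos_nonneg)
    then have \<epsilon>: "\<epsilon> > 0" and \<epsilon>_eq: "\<epsilon> * (1 + C\<^sup>2) / 2 = e / 2" unfolding \<epsilon>_def using e by auto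
    obtain K where K: "K \<ge> 0"
      "\<And>t x y. t > 0 \<Longrightarrow> \<bar>(\<phi> x - \<phi> y) \<bullet> (x - y)\<bar> \<le> \<epsilon>*t/2 + (\<epsilon>/(2*t) + K) * norm (x - y)^2"
      using Cc_inner_increment_bound[OF \<phi> \<epsilon>] by blast
    have "(\<lambda>n. K * C\<^sup>2 * \<tau> n) \<longlonglongrightarrow> K * C\<^sup>2 * 0" by (intro tendsto_intros \<tau>)
    then have "\<forall>\<^sub>F n in sequentially. K * C\<^sup>2 * \<tau> n < e/2"
      by (rule order_tendstoD(2)) (use e in simp)
    then show "\<forall>\<^sub>F n in sequentially. dist (vmeas (\<mu>s n) (\<lambda>x. (1 / \<tau> n) *\<^sub>R (x - b n x)) \<phi>
                 - vmeas (\<nu>s n) (\<lambda>y. (1 / \<tau> n) *\<^sub>R (c n y - y)) \<phi>) 0 < e"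
    proof (rule eventually_mono)
      fix n assume "K * C\<^sup>2 * \<tau> n < e/2"
      then show "dist (vmeas (\<mu>s n) (\<lambda>x. (1 / \<tau> n) *\<^sub>R (x - b n x)) \<phi>
                 - vmeas (\<nu>s n) (\<lambda>y. (1 / \<tau> n) *\<^sub>R (c n y - y)) \<phi>) 0 < e"
        using vmeas_gap_bound[OF \<gamma>[of n] P(1,2)[of n] W[of n] \<tau>_pos[of n] b[of n] c[of n] \<phi> \<epsilon> K(1)
            K(2)[OF \<tau>_pos[of n]]] \<epsilon>_eq
        unfolding dist_real_def diff_zero by linarith
    qed
  qed
qed

theorem mainTheorem3:
  fixes H :: "('a::euclidean_space) measure \<Rightarrow> ereal"
    and \<tau> :: "nat \<Rightarrow> real"
    and \<mu>s \<nu>s :: "nat \<Rightarrow> 'a measure"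
    and \<mu> :: "'a measure"
    and C :: real
  assumes "proper_fun H"
    and "\<And>n. \<tau> n > 0"
    and "\<tau> \<longlonglongrightarrow> 0"
    and "\<And>n. \<mu>s n \<in> P2"
    and "\<And>n. \<nu>s n \<in> P2"
    and "\<And>n. \<nu>s n \<in> Jtau H (\<tau> n) (\<mu>s n)"
    and "\<And>n. W2 (\<mu>s n) (\<nu>s n) \<le> C * \<tau> n"
    and "\<mu> \<in> Pborel"
    and "narrow_conv \<mu>s \<mu>"
  shows "narrow_conv \<nu>s \<mu> \<and>
    (\<forall>\<gamma> b c. (\<forall>n. \<gamma> n \<in> opt_couplings (\<mu>s n) (\<nu>s n)
                 \<and> is_bary_fst (\<gamma> n) (\<mu>s n) (b n) \<and> is_bary_snd (\<gamma> n) (\<nu>s n) (c n)) \<longrightarrow>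
       (\<Inter>m. wstar_cch {vmeas (\<mu>s n) (\<lambda>x. (1 / \<tau> n) *\<^sub>R (x - b n x)) | n. n \<ge> m})
     = (\<Inter>m. wstar_cch {vmeas (\<nu>s n) (\<lambda>y. (1 / \<tau> n) *\<^sub>R (c n y - y)) | n. n \<ge> m}))"
proof (intro conjI allI impI)
  show "narrow_conv \<nu>s \<mu>" by (rule narrow_conv_of_W2_close[OF assms(2-5,7-9)])
next
  fix \<gamma> b c
  assume "\<forall>n. \<gamma> n \<in> opt_couplings (\<mu>s n) (\<nu>s n)
                 \<and> is_bary_fst (\<gamma> n) (\<mu>s n) (b n) \<and> is_bary_snd (\<gamma> n) (\<nu>s n) (c n)"
  then have \<gamma>: "\<And>n. \<gamma> n \<in> opt_couplings (\<mu>s n) (\<nu>s n)"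
    and b: "\<And>n. is_bary_fst (\<gamma> n) (\<mu>s n) (b n)" and c: "\<And>n. is_bary_snd (\<gamma> n) (\<nu>s n) (c n)"
    by auto
  show "(\<Inter>m. wstar_cch {vmeas (\<mu>s n) (\<lambda>x. (1 / \<tau> n) *\<^sub>R (x - b n x)) | n. n \<ge> m})
     = (\<Inter>m. wstar_cch {vmeas (\<nu>s n) (\<lambda>y. (1 / \<tau> n) *\<^sub>R (c n y - y)) | n. n \<ge> m})"
    by (rule tail_hulls_eq) (rule vmeas_gap_tendsto_zero[OF assms(2-5,7) \<gamma> b c])
qed

end
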